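(* Let $X$ and $Y$ be real Banach spaces and $\mathcal{D}$ a closed subspace of $F_Y(X)$. Then $L(F_Y(X)/\mathcal{D},Y)$ is linearly isometrically isomorphic to ${}^{\diamondsuit}\mathcal{D}$, via $f\mapsto(\gamma+\mathcal{D}\mapsto\gamma(f))$ for $f\in{}^{\diamondsuit}\mathcal{D}$.
   Context: $Lip_0(X,Y)$ is the Banach space of Lipschitz maps $f:X\to Y$ with $f(0)=0$ and norm $Lip(f)=\sup_{x\neq y}\|f(x)-f(y)\|/\|x-y\|$. For $x\in X$, $\delta_x^Y\in L(Lip_0(X,Y),Y)$ is evaluation $\delta_x^Y(f)=f(x)$. $F_Y(X)$ is the norm-closed linear span of $\{\delta_x^Y:x\in X\}$ in $L(Lip_0(X,Y),Y)$. For $\mathcal{D}\subset F_Y(X)$, ${}^{\diamondsuit}\mathcal{D}=\{f\in Lip_0(X,Y):\gamma(f)=0\ \forall\gamma\in\mathcal{D}\}$, with the norm $Lip(\cdot)$. $F_Y(X)/\mathcal{D}$ carries the quotient norm. *)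

theory Defs
  imports "HOL-Analysis.Analysis"
begin

definition Lip0 :: "('a::real_normed_vector \<Rightarrow> 'b::real_normed_vector) set" where
  "Lip0 = {f. f 0 = 0 \<and> (\<exists>C. \<forall>x y. norm (f x - f y) \<le> C * norm (x - y))}"

text \<open>Lipschitz constant: sup of the difference quotients (0 is added only so that the
  sup is over a nonempty set when X is trivial; all quotients are nonnegative).\<close>
definition lipnorm :: "('a::real_normed_vector \<Rightarrow> 'b::real_normed_vector) \<Rightarrow> real" where
  "lipnorm f = Sup (insert 0 {norm (f x - f y) / norm (x - y) | x y. x \<noteq> y})"

text \<open>Operators on Lip_0(X,Y) are represented by functions on all maps, extended by 0
  outside Lip_0(X,Y).\<close>
definition BL :: "(('a::real_normed_vector \<Rightarrow> 'b::real_normed_vector) \<Rightarrow> 'b) set" where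
  "BL = {\<gamma>. (\<forall>f\<in>Lip0. \<forall>g\<in>Lip0. \<gamma> (\<lambda>x. f x + g x) = \<gamma> f + \<gamma> g)
          \<and> (\<forall>f\<in>Lip0. \<forall>c. \<gamma> (\<lambda>x. c *\<^sub>R f x) = c *\<^sub>R \<gamma> f)
          \<and> (\<exists>K. \<forall>f\<in>Lip0. norm (\<gamma> f) \<le> K * lipnorm f)
          \<and> (\<forall>f. f \<notin> Lip0 \<longrightarrow> \<gamma> f = 0)}"

definition opnorm :: "(('a::real_normed_vector \<Rightarrow> 'b::real_normed_vector) \<Rightarrow> 'b) \<Rightarrow> real" where
  "opnorm \<gamma> = Sup {norm (\<gamma> f) | f. f \<in> Lip0 \<and> lipnorm f \<le> 1}"

definition delta :: "'a::real_normed_vector \<Rightarrow> ('a \<Rightarrow> 'b::real_normed_vector) \<Rightarrow> 'b" where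
  "delta x = (\<lambda>f. if f \<in> Lip0 then f x else 0)"

definition span_delta :: "(('a::real_normed_vector \<Rightarrow> 'b::real_normed_vector) \<Rightarrow> 'b) set" where
  "span_delta = {\<gamma>. \<exists>(n::nat) (c::nat \<Rightarrow> real) (x::nat \<Rightarrow> 'a). \<gamma> = (\<lambda>f::'a \<Rightarrow> 'b. \<Sum>i<n. c i *\<^sub>R delta (x i) f)}"

definition FY :: "(('a::real_normed_vector \<Rightarrow> 'b::real_normed_vector) \<Rightarrow> 'b) set" where
  "FY = {\<gamma> \<in> BL. \<forall>e>0. \<exists>\<eta>\<in>span_delta. opnorm (\<lambda>f. \<gamma> f - \<eta> f) < e}"

definition closed_subspace_FY :: "(('a::real_normed_vector \<Rightarrow> 'b::real_normed_vector) \<Rightarrow> 'b) set \<Rightarrow> bool" where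
  "closed_subspace_FY D \<longleftrightarrow> D \<subseteq> FY \<and> (\<lambda>f. 0) \<in> D
     \<and> (\<forall>\<gamma>\<in>D. \<forall>\<eta>\<in>D. (\<lambda>f. \<gamma> f + \<eta> f) \<in> D)
     \<and> (\<forall>\<gamma>\<in>D. \<forall>c. (\<lambda>f. c *\<^sub>R \<gamma> f) \<in> D)
     \<and> (\<forall>\<gamma>\<in>FY. (\<forall>e>0. \<exists>\<eta>\<in>D. opnorm (\<lambda>f. \<gamma> f - \<eta> f) < e) \<longrightarrow> \<gamma> \<in> D)"

definition preannih :: "(('a::real_normed_vector \<Rightarrow> 'b::real_normed_vector) \<Rightarrow> 'b) set \<Rightarrow> ('a \<Rightarrow> 'b) set" where
  "preannih D = {f \<in> Lip0. \<forall>\<gamma>\<in>D. \<gamma> f = 0}"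

definition coset :: "(('a::real_normed_vector \<Rightarrow> 'b::real_normed_vector) \<Rightarrow> 'b) set
    \<Rightarrow> (('a \<Rightarrow> 'b) \<Rightarrow> 'b) \<Rightarrow> (('a \<Rightarrow> 'b) \<Rightarrow> 'b) set" where
  "coset D \<gamma> = {(\<lambda>f. \<gamma> f + \<eta> f) | \<eta>. \<eta> \<in> D}"

definition quot :: "(('a::real_normed_vector \<Rightarrow> 'b::real_normed_vector) \<Rightarrow> 'b) set
    \<Rightarrow> (('a \<Rightarrow> 'b) \<Rightarrow> 'b) set set" where
  "quot D = coset D ` FY"

definition qnorm :: "(('a::real_normed_vector \<Rightarrow> 'b::real_normed_vector) \<Rightarrow> 'b) set \<Rightarrow> real" where
  "qnorm C = Inf {opnorm \<gamma> | \<gamma>. \<gamma> \<in> C}"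

definition BLQ :: "(('a::real_normed_vector \<Rightarrow> 'b::real_normed_vector) \<Rightarrow> 'b) set
    \<Rightarrow> ((('a \<Rightarrow> 'b) \<Rightarrow> 'b) set \<Rightarrow> 'b) set" where
  "BLQ D = {T. (\<forall>\<gamma>\<in>FY. \<forall>\<eta>\<in>FY. T (coset D (\<lambda>f. \<gamma> f + \<eta> f)) = T (coset D \<gamma>) + T (coset D \<eta>))
          \<and> (\<forall>\<gamma>\<in>FY. \<forall>c. T (coset D (\<lambda>f. c *\<^sub>R \<gamma> f)) = c *\<^sub>R T (coset D \<gamma>))
          \<and> (\<exists>K. \<forall>C\<in>quot D. norm (T C) \<le> K * qnorm C)
          \<and> (\<forall>C. C \<notin> quot D \<longrightarrow> T C = 0)}"

definition qopnorm :: "(('a::real_normed_vector \<Rightarrow> 'b::real_normed_vector) \<Rightarrow> 'b) set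
    \<Rightarrow> ((('a \<Rightarrow> 'b) \<Rightarrow> 'b) set \<Rightarrow> 'b) \<Rightarrow> real" where
  "qopnorm D T = Sup {norm (T C) | C. C \<in> quot D \<and> qnorm C \<le> 1}"

definition Phi :: "(('a::real_normed_vector \<Rightarrow> 'b::real_normed_vector) \<Rightarrow> 'b) set
    \<Rightarrow> ('a \<Rightarrow> 'b) \<Rightarrow> (('a \<Rightarrow> 'b) \<Rightarrow> 'b) set \<Rightarrow> 'b" where
  "Phi D f = (\<lambda>C. if C \<in> quot D then (SOME \<gamma>. \<gamma> \<in> C) f else 0)"

end

theory Submission
  imports Defs
begin

(* The inverse of Phi sends T to the map x \<mapsto> T (delta x + D). Evaluating Phi f at the
   coset of delta x returns f x, so Phi is injective. For a given T, both T (gamma + D) and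
   gamma (x \<mapsto> T (delta x + D)) are additive and bounded in gamma on F_Y(X) and agree on the
   span of the deltas, hence everywhere by density; this gives surjectivity.
   For the isometry, gamma f = gamma' f for all gamma' in gamma + D yields
   |Phi f (gamma + D)| \<le> Lip f * ||gamma + D||, while (delta x - delta y) / ||x - y|| has quotient
   norm at most 1 and is sent to the difference quotient of f. *)

section \<open>Lipschitz maps and evaluation functionals\<close>

lemma lipnorm_bdd_above:
  assumes "f \<in> Lip0"
  shows "bdd_above (insert 0 {norm (f x - f y) / norm (x - y) | x y. x \<noteq> y})"
proof -
  obtain C where C: "\<And>x y. norm (f x - f y) \<le> C * norm (x - y)"
    using assms by (auto simp: Lip0_def)
  have "norm (f x - f y) / norm (x - y) \<le> C" if "x \<noteq> y" for x y
    using C[of x y] that by (simp add: divide_le_eq)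
  then show ?thesis
    by (intro bdd_aboveI[where M = "max 0 C"]) (auto simp: le_max_iff_disj)
qed

lemma lipnorm_nonneg: "f \<in> Lip0 \<Longrightarrow> 0 \<le> lipnorm f"
  unfolding lipnorm_def by (rule cSup_upper[OF _ lipnorm_bdd_above]) auto

lemma norm_diff_le_lipnorm:
  assumes "f \<in> Lip0"
  shows "norm (f x - f y) \<le> lipnorm f * norm (x - y)"
proof (cases "x = y")
  case False
  then have "norm (f x - f y) / norm (x - y) \<le> lipnorm f"
    unfolding lipnorm_def by (intro cSup_upper[OF _ lipnorm_bdd_above[OF assms]]) auto
  with False show ?thesis by (simp add: divide_le_eq)
qed simp

lemma norm_le_lipnorm: "f \<in> Lip0 \<Longrightarrow> norm (f x) \<le> lipnorm f * norm x"
  using norm_diff_le_lipnorm[of f x 0] by (simp add: Lip0_def)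

lemma lipnorm_least:
  assumes "\<And>x y. norm (f x - f y) \<le> M * norm (x - y)" and "0 \<le> M"
  shows "lipnorm f \<le> M"
  unfolding lipnorm_def
proof (rule cSup_least)
  fix q assume "q \<in> insert 0 {norm (f x - f y) / norm (x - y) | x y. x \<noteq> y}"
  then show "q \<le> M"
    using assms by (auto simp: divide_le_eq)
qed simp

lemma Lip0_zero: "(\<lambda>x. 0) \<in> Lip0"
  by (auto simp: Lip0_def intro: exI[of _ 0])

lemma lipnorm_zero: "lipnorm (\<lambda>x::'a::real_normed_vector. 0::'b::real_normed_vector) = 0"
  by (intro antisym lipnorm_least lipnorm_nonneg[OF Lip0_zero]) auto

lemma Lip0_add:
  assumes f: "f \<in> Lip0" and g: "g \<in> Lip0"
  shows "(\<lambda>x. f x + g x) \<in> Lip0"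
proof -
  have "norm ((f x + g x) - (f y + g y)) \<le> (lipnorm f + lipnorm g) * norm (x - y)" for x y
  proof -
    have "norm ((f x + g x) - (f y + g y)) \<le> norm (f x - f y) + norm (g x - g y)"
      by (metis add_diff_add norm_triangle_ineq)
    also have "\<dots> \<le> (lipnorm f + lipnorm g) * norm (x - y)"
      using norm_diff_le_lipnorm[OF f] norm_diff_le_lipnorm[OF g]
      by (simp add: distrib_right add_mono)
    finally show ?thesis .
  qed
  with f g show ?thesis
    by (auto simp: Lip0_def)
qed

lemma Lip0_scaleR:
  assumes f: "f \<in> Lip0"
  shows "(\<lambda>x. c *\<^sub>R f x) \<in> Lip0"
proof -
  have "norm (c *\<^sub>R f x - c *\<^sub>R f y) \<le> (\<bar>c\<bar> * lipnorm f) * norm (x - y)" for x y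
    using norm_diff_le_lipnorm[OF f, of x y]
    by (simp flip: scaleR_diff_right add: mult.assoc mult_left_mono)
  with f show ?thesis
    by (auto simp: Lip0_def)
qed

lemma Lip0_eq_0_if_lipnorm_eq_0: "f \<in> Lip0 \<Longrightarrow> lipnorm f = 0 \<Longrightarrow> f = (\<lambda>x. 0)"
  using norm_le_lipnorm[of f] by fastforce

lemma BL_apply_add: "\<gamma> \<in> BL \<Longrightarrow> f \<in> Lip0 \<Longrightarrow> g \<in> Lip0 \<Longrightarrow> \<gamma> (\<lambda>x. f x + g x) = \<gamma> f + \<gamma> g"
  by (simp add: BL_def)

lemma BL_apply_scaleR: "\<gamma> \<in> BL \<Longrightarrow> f \<in> Lip0 \<Longrightarrow> \<gamma> (\<lambda>x. c *\<^sub>R f x) = c *\<^sub>R \<gamma> f"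
  by (simp add: BL_def)

lemma BL_apply_zero: "\<gamma> \<in> BL \<Longrightarrow> \<gamma> (\<lambda>x. 0) = 0"
  using BL_apply_scaleR[OF _ Lip0_zero, of \<gamma> 0] by simp

lemma BL_bdd_above:
  assumes "\<gamma> \<in> BL"
  shows "bdd_above {norm (\<gamma> f) | f. f \<in> Lip0 \<and> lipnorm f \<le> 1}"
proof -
  obtain K where K: "\<And>f. f \<in> Lip0 \<Longrightarrow> norm (\<gamma> f) \<le> K * lipnorm f"
    using assms unfolding BL_def by blast
  have "norm (\<gamma> f) \<le> \<bar>K\<bar>" if "f \<in> Lip0" "lipnorm f \<le> 1" for f
  proof -
    have "norm (\<gamma> f) \<le> \<bar>K\<bar> * lipnorm f"
      using K[OF that(1)] lipnorm_nonneg[OF that(1)] by (meson abs_ge_self mult_right_mono order.trans)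
    also have "\<dots> \<le> \<bar>K\<bar>"
      using that(2) by (simp add: mult_left_le)
    finally show ?thesis .
  qed
  then show ?thesis
    by (intro bdd_aboveI[where M = "\<bar>K\<bar>"]) auto
qed

lemma opnorm_upper: "\<gamma> \<in> BL \<Longrightarrow> f \<in> Lip0 \<Longrightarrow> lipnorm f \<le> 1 \<Longrightarrow> norm (\<gamma> f) \<le> opnorm \<gamma>"
  unfolding opnorm_def by (rule cSup_upper[OF _ BL_bdd_above]) auto

lemma opnorm_nonneg: "\<gamma> \<in> BL \<Longrightarrow> 0 \<le> opnorm \<gamma>"
  using opnorm_upper[OF _ Lip0_zero] lipnorm_zero by (metis norm_ge_zero order.trans zero_le_one)

lemma opnorm_least:
  assumes "\<And>f. f \<in> Lip0 \<Longrightarrow> lipnorm f \<le> 1 \<Longrightarrow> norm (\<gamma> f) \<le> M"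
  shows "opnorm \<gamma> \<le> M"
  unfolding opnorm_def
proof (rule cSup_least)
  show "{norm (\<gamma> f) | f. f \<in> Lip0 \<and> lipnorm f \<le> 1} \<noteq> {}"
    using Lip0_zero lipnorm_zero by (metis (mono_tags, lifting) empty_iff mem_Collect_eq zero_le_one)
qed (use assms in auto)

lemma norm_apply_le_opnorm:
  assumes \<gamma>: "\<gamma> \<in> BL" and f: "f \<in> Lip0"
  shows "norm (\<gamma> f) \<le> opnorm \<gamma> * lipnorm f"
proof (cases "lipnorm f = 0")
  case True
  then show ?thesis
    using Lip0_eq_0_if_lipnorm_eq_0[OF f] BL_apply_zero[OF \<gamma>] by simp
next
  case False
  define L where "L = lipnorm f"
  have L: "L > 0"
    using False lipnorm_nonneg[OF f] by (simp add: L_def)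
  have "lipnorm (\<lambda>x. (1/L) *\<^sub>R f x) \<le> 1"
  proof (rule lipnorm_least)
    show "norm ((1/L) *\<^sub>R f x - (1/L) *\<^sub>R f y) \<le> 1 * norm (x - y)" for x y
      using norm_diff_le_lipnorm[OF f, of x y] L
      by (simp flip: scaleR_diff_right add: L_def divide_le_eq mult.commute)
  qed simp
  then have "norm ((1/L) *\<^sub>R \<gamma> f) \<le> opnorm \<gamma>"
    using opnorm_upper[OF \<gamma> Lip0_scaleR[OF f]] BL_apply_scaleR[OF \<gamma> f] by metis
  with L show ?thesis
    by (simp add: L_def divide_le_eq mult.commute)
qed

lemma BL_add:
  assumes \<gamma>: "\<gamma> \<in> BL" and \<eta>: "\<eta> \<in> BL"
  shows "(\<lambda>f. \<gamma> f + \<eta> f) \<in> BL"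
proof -
  have "norm (\<gamma> f + \<eta> f) \<le> (opnorm \<gamma> + opnorm \<eta>) * lipnorm f" if "f \<in> Lip0" for f :: "'a \<Rightarrow> 'b"
    using norm_triangle_ineq[of "\<gamma> f" "\<eta> f"]
      norm_apply_le_opnorm[OF \<gamma> that] norm_apply_le_opnorm[OF \<eta> that]
    by (simp add: distrib_right)
  with assms show ?thesis
    unfolding BL_def by (auto simp: Lip0_add Lip0_scaleR scaleR_add_right)
qed

lemma BL_scaleR:
  assumes \<gamma>: "\<gamma> \<in> BL"
  shows "(\<lambda>f. c *\<^sub>R \<gamma> f) \<in> BL"
proof -
  have "norm (c *\<^sub>R \<gamma> f) \<le> (\<bar>c\<bar> * opnorm \<gamma>) * lipnorm f" if "f \<in> Lip0" for f :: "'a \<Rightarrow> 'b"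
    using norm_apply_le_opnorm[OF \<gamma> that] by (simp add: mult.assoc mult_left_mono)
  with assms show ?thesis
    unfolding BL_def by (auto simp: Lip0_add Lip0_scaleR scaleR_add_right)
qed

lemma BL_diff: "\<gamma> \<in> BL \<Longrightarrow> \<eta> \<in> BL \<Longrightarrow> (\<lambda>f. \<gamma> f - \<eta> f) \<in> BL"
  using BL_add[OF _ BL_scaleR, of \<gamma> \<eta> "-1"] by simp

lemma opnorm_add_le:
  assumes \<gamma>: "\<gamma> \<in> BL" and \<eta>: "\<eta> \<in> BL"
  shows "opnorm (\<lambda>f. \<gamma> f + \<eta> f) \<le> opnorm \<gamma> + opnorm \<eta>"
proof (rule opnorm_least)
  fix f :: "'a \<Rightarrow> 'b" assume f: "f \<in> Lip0" "lipnorm f \<le> 1"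
  have "norm (\<gamma> f + \<eta> f) \<le> (opnorm \<gamma> + opnorm \<eta>) * lipnorm f"
    using norm_triangle_ineq[of "\<gamma> f" "\<eta> f"]
      norm_apply_le_opnorm[OF \<gamma> f(1)] norm_apply_le_opnorm[OF \<eta> f(1)]
    by (simp add: distrib_right)
  also have "\<dots> \<le> opnorm \<gamma> + opnorm \<eta>"
    using f opnorm_nonneg[OF \<gamma>] opnorm_nonneg[OF \<eta>] by (simp add: mult_left_le)
  finally show "norm (\<gamma> f + \<eta> f) \<le> opnorm \<gamma> + opnorm \<eta>" .
qed

lemma opnorm_scaleR_le:
  assumes \<gamma>: "\<gamma> \<in> BL"
  shows "opnorm (\<lambda>f. c *\<^sub>R \<gamma> f) \<le> \<bar>c\<bar> * opnorm \<gamma>"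
proof (rule opnorm_least)
  fix f :: "'a \<Rightarrow> 'b" assume f: "f \<in> Lip0" "lipnorm f \<le> 1"
  have "norm (c *\<^sub>R \<gamma> f) \<le> \<bar>c\<bar> * (opnorm \<gamma> * lipnorm f)"
    using norm_apply_le_opnorm[OF \<gamma> f(1)] by (simp add: mult_left_mono)
  also have "\<dots> \<le> \<bar>c\<bar> * opnorm \<gamma>"
    using f opnorm_nonneg[OF \<gamma>] by (simp add: mult_left_mono mult_left_le)
  finally show "norm (c *\<^sub>R \<gamma> f) \<le> \<bar>c\<bar> * opnorm \<gamma>" .
qed

lemma opnorm_zero: "opnorm (\<lambda>f::'a::real_normed_vector \<Rightarrow> 'b::real_normed_vector. 0::'b) = 0"
proof -
  have "(\<lambda>f::'a \<Rightarrow> 'b. 0::'b) \<in> BL"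
    by (auto simp: BL_def intro: exI[of _ 0])
  then show ?thesis
    using opnorm_least[of "\<lambda>f::'a \<Rightarrow> 'b. 0::'b" 0] opnorm_nonneg by fastforce
qed

lemma delta_apply: "f \<in> Lip0 \<Longrightarrow> delta x f = f x"
  by (simp add: delta_def)

lemma delta_zero: "delta 0 = (\<lambda>f. 0)"
  by (auto simp: delta_def Lip0_def)

lemma delta_BL: "delta x \<in> BL"
proof -
  have "norm (delta x f) \<le> norm x * lipnorm f" if "f \<in> Lip0" for f :: "'a \<Rightarrow> 'b"
    using norm_le_lipnorm[OF that, of x] that by (simp add: delta_apply mult.commute)
  then show ?thesis
    unfolding BL_def by (auto simp: delta_def Lip0_add Lip0_scaleR)
qed

lemma opnorm_delta_diff_le: "opnorm (\<lambda>f. delta x f - delta y f) \<le> norm (x - y)"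
proof (rule opnorm_least)
  fix f :: "'a \<Rightarrow> 'b" assume f: "f \<in> Lip0" "lipnorm f \<le> 1"
  have "norm (f x - f y) \<le> lipnorm f * norm (x - y)"
    using norm_diff_le_lipnorm[OF f(1)] .
  also have "\<dots> \<le> norm (x - y)"
    using f lipnorm_nonneg[OF f(1)] by (simp add: mult_left_le_one_le)
  finally show "norm (delta x f - delta y f) \<le> norm (x - y)"
    using f(1) by (simp add: delta_apply)
qed

section \<open>The space F_Y(X)\<close>

lemma span_delta_add:
  assumes "\<gamma> \<in> span_delta" and "\<eta> \<in> span_delta"
  shows "(\<lambda>f. \<gamma> f + \<eta> f) \<in> span_delta"
proof -
  obtain m a u where \<gamma>: "\<gamma> = (\<lambda>f. \<Sum>i<(m::nat). a i *\<^sub>R delta (u i) f)"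
    using assms(1) unfolding span_delta_def by blast
  obtain n b v where \<eta>: "\<eta> = (\<lambda>f. \<Sum>i<(n::nat). b i *\<^sub>R delta (v i) f)"
    using assms(2) unfolding span_delta_def by blast
  have sum_split: "(\<Sum>i<m + k. g i) = (\<Sum>i<m. g i) + (\<Sum>i<k. g (m + i))"
    for k and g :: "nat \<Rightarrow> 'b"
    by (induction k) (simp_all add: add.assoc)
  define c where "c i = (if i < m then a i else b (i - m))" for i
  define x where "x i = (if i < m then u i else v (i - m))" for i
  have "(\<lambda>f. \<gamma> f + \<eta> f) = (\<lambda>f. \<Sum>i<m + n. c i *\<^sub>R delta (x i) f)"
    unfolding \<gamma> \<eta> sum_split c_def x_def by simp
  then show ?thesis
    unfolding span_delta_def by blast
qed

lemma span_delta_scaleR: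
  assumes "\<gamma> \<in> span_delta"
  shows "(\<lambda>f. a *\<^sub>R \<gamma> f) \<in> span_delta"
proof -
  obtain n c x where \<gamma>: "\<gamma> = (\<lambda>f. \<Sum>i<(n::nat). c i *\<^sub>R delta (x i) f)"
    using assms unfolding span_delta_def by blast
  have "(\<lambda>f. a *\<^sub>R \<gamma> f) = (\<lambda>f. \<Sum>i<n. (a * c i) *\<^sub>R delta (x i) f)"
    unfolding \<gamma> by (simp add: scaleR_sum_right)
  then show ?thesis
    unfolding span_delta_def by (intro CollectI exI)
qed

lemma delta_in_span_delta: "delta x \<in> span_delta"
proof -
  have "delta x = (\<lambda>f. \<Sum>i<Suc 0. 1 *\<^sub>R delta x f)"
    by simp
  then show ?thesis
    unfolding span_delta_def by (intro CollectI exI[of _ "Suc 0"] exI[of _ "\<lambda>i. 1"] exI[of _ "\<lambda>i. x"])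
qed

lemma span_delta_subset_BL: "span_delta \<subseteq> BL"
proof -
  have "(\<lambda>f. \<Sum>i<(n::nat). c i *\<^sub>R delta (x i) f) \<in> BL" for n c x
  proof (induction n)
    case 0
    then show ?case
      using BL_scaleR[OF delta_BL, of 0] by simp
  next
    case (Suc n)
    then show ?case
      using BL_add[OF Suc BL_scaleR[OF delta_BL, of "c n" "x n"]] by simp
  qed
  then show ?thesis
    unfolding span_delta_def by blast
qed

lemma span_delta_subset_FY: "span_delta \<subseteq> FY"
proof
  fix \<eta> :: "('a \<Rightarrow> 'b) \<Rightarrow> 'b" assume "\<eta> \<in> span_delta"
  moreover have "opnorm (\<lambda>f. \<eta> f - \<eta> f) = 0"
    using opnorm_zero by simp
  ultimately show "\<eta> \<in> FY"
    using span_delta_subset_BL unfolding FY_def by (auto intro: bexI[of _ \<eta>])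
qed

lemma FY_BL: "\<gamma> \<in> FY \<Longrightarrow> \<gamma> \<in> BL"
  by (simp add: FY_def)

lemma delta_FY: "delta x \<in> FY"
  using delta_in_span_delta span_delta_subset_FY by blast

lemma FY_zero: "(\<lambda>f. 0) \<in> FY"
  using delta_FY[of 0] by (simp add: delta_zero)

lemma FY_approx:
  "\<gamma> \<in> FY \<Longrightarrow> 0 < e \<Longrightarrow> \<exists>\<eta>\<in>span_delta. opnorm (\<lambda>f. \<gamma> f - \<eta> f) < e"
  by (simp add: FY_def)

lemma FY_add:
  assumes \<gamma>: "\<gamma> \<in> FY" and \<eta>: "\<eta> \<in> FY"
  shows "(\<lambda>f. \<gamma> f + \<eta> f) \<in> FY"
proof -
  have "\<exists>\<zeta>\<in>span_delta. opnorm (\<lambda>f. (\<gamma> f + \<eta> f) - \<zeta> f) < e" if "0 < e" for e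
  proof -
    obtain \<gamma>' where \<gamma>': "\<gamma>' \<in> span_delta" "opnorm (\<lambda>f. \<gamma> f - \<gamma>' f) < e/2"
      using FY_approx[OF \<gamma>, of "e/2"] \<open>0 < e\<close> by auto
    obtain \<eta>' where \<eta>': "\<eta>' \<in> span_delta" "opnorm (\<lambda>f. \<eta> f - \<eta>' f) < e/2"
      using FY_approx[OF \<eta>, of "e/2"] \<open>0 < e\<close> by auto
    have "(\<lambda>f. (\<gamma> f + \<eta> f) - (\<gamma>' f + \<eta>' f)) = (\<lambda>f. (\<gamma> f - \<gamma>' f) + (\<eta> f - \<eta>' f))"
      by (simp add: algebra_simps)
    moreover have "opnorm (\<lambda>f. (\<gamma> f - \<gamma>' f) + (\<eta> f - \<eta>' f))
        \<le> opnorm (\<lambda>f. \<gamma> f - \<gamma>' f) + opnorm (\<lambda>f. \<eta> f - \<eta>' f)"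
      using \<gamma> \<eta> \<gamma>'(1) \<eta>'(1) span_delta_subset_BL
      by (intro opnorm_add_le BL_diff) (auto intro: FY_BL)
    ultimately have "opnorm (\<lambda>f. (\<gamma> f + \<eta> f) - (\<gamma>' f + \<eta>' f)) < e"
      using \<gamma>'(2) \<eta>'(2) by simp
    then show ?thesis
      using span_delta_add[OF \<gamma>'(1) \<eta>'(1)] by (auto intro!: bexI[of _ "\<lambda>f. \<gamma>' f + \<eta>' f"])
  qed
  then show ?thesis
    using BL_add[OF FY_BL[OF \<gamma>] FY_BL[OF \<eta>]] unfolding FY_def by blast
qed

lemma abs_mult_less_if_less_divide:
  fixes a t e :: real
  assumes "0 \<le> t" and "t < e / (\<bar>a\<bar> + 1)"
  shows "\<bar>a\<bar> * t < e"
proof -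
  have "(\<bar>a\<bar> + 1) * t < e"
    using assms(2) by (simp add: pos_less_divide_eq mult.commute)
  with assms(1) show ?thesis
    by (simp add: distrib_right)
qed

lemma FY_scaleR:
  assumes \<gamma>: "\<gamma> \<in> FY"
  shows "(\<lambda>f. a *\<^sub>R \<gamma> f) \<in> FY"
proof -
  have "\<exists>\<zeta>\<in>span_delta. opnorm (\<lambda>f. a *\<^sub>R \<gamma> f - \<zeta> f) < e" if "0 < e" for e
  proof -
    have "0 < e / (\<bar>a\<bar> + 1)"
      using \<open>0 < e\<close> by simp
    then obtain \<eta> where \<eta>: "\<eta> \<in> span_delta" "opnorm (\<lambda>f. \<gamma> f - \<eta> f) < e / (\<bar>a\<bar> + 1)"
      using FY_approx[OF \<gamma>] by blast
    have "(\<lambda>f. a *\<^sub>R \<gamma> f - a *\<^sub>R \<eta> f) = (\<lambda>f. a *\<^sub>R (\<gamma> f - \<eta> f))"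
      by (simp add: algebra_simps)
    moreover have "opnorm (\<lambda>f. a *\<^sub>R (\<gamma> f - \<eta> f)) \<le> \<bar>a\<bar> * opnorm (\<lambda>f. \<gamma> f - \<eta> f)"
      using \<gamma> \<eta>(1) span_delta_subset_BL by (intro opnorm_scaleR_le BL_diff) (auto intro: FY_BL)
    moreover have "\<bar>a\<bar> * opnorm (\<lambda>f. \<gamma> f - \<eta> f) < e"
      using \<gamma> \<eta>(1) span_delta_subset_BL
      by (intro abs_mult_less_if_less_divide[OF _ \<eta>(2)] opnorm_nonneg BL_diff) (auto intro: FY_BL)
    ultimately show ?thesis
      using span_delta_scaleR[OF \<eta>(1), of a] by (auto intro!: bexI[of _ "\<lambda>f. a *\<^sub>R \<eta> f"])
  qed
  then show ?thesis
    using BL_scaleR[OF FY_BL[OF \<gamma>]] unfolding FY_def by blast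
qed

lemma FY_diff: "\<gamma> \<in> FY \<Longrightarrow> \<eta> \<in> FY \<Longrightarrow> (\<lambda>f. \<gamma> f - \<eta> f) \<in> FY"
  using FY_add[OF _ FY_scaleR, of \<gamma> \<eta> "-1"] by simp

lemma bounded_additive_eq_0_on_FY:
  fixes L :: "(('a::real_normed_vector \<Rightarrow> 'b::real_normed_vector) \<Rightarrow> 'b) \<Rightarrow> 'c::real_normed_vector"
  assumes diff: "\<And>\<gamma> \<eta>. \<gamma> \<in> FY \<Longrightarrow> \<eta> \<in> FY \<Longrightarrow> L (\<lambda>f. \<gamma> f - \<eta> f) = L \<gamma> - L \<eta>"
    and bounded: "\<And>\<gamma>. \<gamma> \<in> FY \<Longrightarrow> norm (L \<gamma>) \<le> K * opnorm \<gamma>"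
    and span: "\<And>\<eta>. \<eta> \<in> span_delta \<Longrightarrow> L \<eta> = 0"
    and \<gamma>: "\<gamma> \<in> FY"
  shows "L \<gamma> = 0"
proof -
  have "norm (L \<gamma>) \<le> 0 + e" if "0 < e" for e
  proof -
    have "0 < e / (\<bar>K\<bar> + 1)"
      using \<open>0 < e\<close> by simp
    then obtain \<eta> where \<eta>: "\<eta> \<in> span_delta" "opnorm (\<lambda>f. \<gamma> f - \<eta> f) < e / (\<bar>K\<bar> + 1)"
      using FY_approx[OF \<gamma>] by blast
    have \<eta>_FY: "\<eta> \<in> FY"
      using \<eta>(1) span_delta_subset_FY by blast
    have "L \<gamma> = L (\<lambda>f. \<gamma> f - \<eta> f)"
      using diff[OF \<gamma> \<eta>_FY] span[OF \<eta>(1)] by simp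
    also have "norm \<dots> \<le> \<bar>K\<bar> * opnorm (\<lambda>f. \<gamma> f - \<eta> f)"
      using bounded[OF FY_diff[OF \<gamma> \<eta>_FY]] opnorm_nonneg[OF FY_BL[OF FY_diff[OF \<gamma> \<eta>_FY]]]
      by (meson abs_ge_self mult_right_mono order.trans)
    also have "\<dots> \<le> e"
      using abs_mult_less_if_less_divide[OF _ \<eta>(2)] opnorm_nonneg[OF FY_BL[OF FY_diff[OF \<gamma> \<eta>_FY]]]
      by simp
    finally show ?thesis by simp
  qed
  then show ?thesis
    using field_le_epsilon[of "norm (L \<gamma>)" 0] by simp
qed

section \<open>The quotient F_Y(X)/D and its dual\<close>

definition subspace_FY :: "(('a::real_normed_vector \<Rightarrow> 'b::real_normed_vector) \<Rightarrow> 'b) set \<Rightarrow> bool" where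
  "subspace_FY D \<longleftrightarrow> D \<subseteq> FY \<and> (\<lambda>f. 0) \<in> D
     \<and> (\<forall>\<gamma>\<in>D. \<forall>\<eta>\<in>D. (\<lambda>f. \<gamma> f + \<eta> f) \<in> D)
     \<and> (\<forall>\<gamma>\<in>D. \<forall>c. (\<lambda>f. c *\<^sub>R \<gamma> f) \<in> D)"

lemma subspace_FY_if_closed_subspace_FY: "closed_subspace_FY D \<Longrightarrow> subspace_FY D"
  by (simp add: closed_subspace_FY_def subspace_FY_def)

lemma subspace_FY_subset: "subspace_FY D \<Longrightarrow> D \<subseteq> FY"
  and subspace_FY_zero: "subspace_FY D \<Longrightarrow> (\<lambda>f. 0) \<in> D"
  and subspace_FY_add: "subspace_FY D \<Longrightarrow> \<gamma> \<in> D \<Longrightarrow> \<eta> \<in> D \<Longrightarrow> (\<lambda>f. \<gamma> f + \<eta> f) \<in> D"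
  and subspace_FY_scaleR: "subspace_FY D \<Longrightarrow> \<gamma> \<in> D \<Longrightarrow> (\<lambda>f. c *\<^sub>R \<gamma> f) \<in> D"
  by (simp_all add: subspace_FY_def)

lemma mem_coset_iff: "\<gamma>' \<in> coset D \<gamma> \<longleftrightarrow> (\<exists>\<eta>\<in>D. \<gamma>' = (\<lambda>f. \<gamma> f + \<eta> f))"
  by (auto simp: coset_def)

lemma coset_self: "subspace_FY D \<Longrightarrow> \<gamma> \<in> coset D \<gamma>"
  unfolding mem_coset_iff using subspace_FY_zero by fastforce

lemma coset_subset_FY:
  assumes "subspace_FY D" and "\<gamma> \<in> FY"
  shows "coset D \<gamma> \<subseteq> FY"
proof
  fix \<gamma>' assume "\<gamma>' \<in> coset D \<gamma>"
  then obtain \<eta> where "\<eta> \<in> D" and "\<gamma>' = (\<lambda>f. \<gamma> f + \<eta> f)"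
    unfolding mem_coset_iff by blast
  then show "\<gamma>' \<in> FY"
    using FY_add[OF assms(2)] subspace_FY_subset[OF assms(1)] by blast
qed

lemma coset_eq_if_mem:
  assumes D: "subspace_FY D" and "\<gamma> \<in> D"
  shows "coset D \<gamma> = D"
proof
  show "coset D \<gamma> \<subseteq> D"
    using subspace_FY_add[OF D \<open>\<gamma> \<in> D\<close>] by (auto simp: mem_coset_iff)
  show "D \<subseteq> coset D \<gamma>"
  proof
    fix \<eta> assume "\<eta> \<in> D"
    then have "(\<lambda>f. \<eta> f + (-1) *\<^sub>R \<gamma> f) \<in> D"
      using D \<open>\<gamma> \<in> D\<close> by (intro subspace_FY_add subspace_FY_scaleR)
    then show "\<eta> \<in> coset D \<gamma>"
      unfolding mem_coset_iff by (auto intro!: bexI[of _ "\<lambda>f. \<eta> f + (-1) *\<^sub>R \<gamma> f"])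
  qed
qed

lemma coset_in_quot: "\<gamma> \<in> FY \<Longrightarrow> coset D \<gamma> \<in> quot D"
  by (simp add: quot_def)

lemma quotE:
  assumes "C \<in> quot D"
  obtains \<gamma> where "\<gamma> \<in> FY" and "C = coset D \<gamma>"
  using assms by (auto simp: quot_def)

lemma quot_subset_FY: "subspace_FY D \<Longrightarrow> C \<in> quot D \<Longrightarrow> C \<subseteq> FY"
  by (metis coset_subset_FY quotE)

lemma quot_nonempty: "subspace_FY D \<Longrightarrow> C \<in> quot D \<Longrightarrow> C \<noteq> {}"
  by (metis coset_self empty_iff quotE)

lemma qnorm_nonneg:
  assumes "subspace_FY D" and "C \<in> quot D"
  shows "0 \<le> qnorm C"
  unfolding qnorm_def
proof (rule cInf_greatest)
  show "{opnorm \<gamma> | \<gamma>. \<gamma> \<in> C} \<noteq> {}"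
    using quot_nonempty[OF assms] by blast
  show "0 \<le> q" if "q \<in> {opnorm \<gamma> | \<gamma>. \<gamma> \<in> C}" for q
    using that quot_subset_FY[OF assms] opnorm_nonneg FY_BL by blast
qed

lemma qnorm_le_opnorm:
  assumes "subspace_FY D" and "C \<in> quot D" and "\<gamma> \<in> C"
  shows "qnorm C \<le> opnorm \<gamma>"
proof -
  have "bdd_below {opnorm \<gamma>' | \<gamma>'. \<gamma>' \<in> C}"
    using quot_subset_FY[OF assms(1,2)] opnorm_nonneg FY_BL by (intro bdd_belowI[where m = 0]) blast
  then show ?thesis
    unfolding qnorm_def using \<open>\<gamma> \<in> C\<close> by (intro cInf_lower) auto
qed

lemma qnorm_coset_zero: "subspace_FY D \<Longrightarrow> qnorm (coset D (\<lambda>f. 0)) = 0"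
  using qnorm_le_opnorm[OF _ coset_in_quot[OF FY_zero] coset_self] qnorm_nonneg[OF _ coset_in_quot[OF FY_zero]]
  by (metis antisym opnorm_zero)

lemma qnorm_delta_diff_quotient_le_1:
  fixes D :: "(('a::real_normed_vector \<Rightarrow> 'b::real_normed_vector) \<Rightarrow> 'b) set"
  assumes D: "subspace_FY D" and "x \<noteq> y"
  shows "qnorm (coset D (\<lambda>g. (1 / norm (x - y)) *\<^sub>R (delta x g - delta y g))) \<le> 1"
    (is "qnorm (coset D ?\<gamma>) \<le> 1")
proof -
  have "?\<gamma> \<in> FY"
    by (intro FY_scaleR FY_diff delta_FY)
  then have "qnorm (coset D ?\<gamma>) \<le> opnorm ?\<gamma>"
    by (intro qnorm_le_opnorm[OF D] coset_in_quot coset_self[OF D])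
  also have "\<dots> \<le> \<bar>1 / norm (x - y)\<bar> * opnorm (\<lambda>g::'a \<Rightarrow> 'b. delta x g - delta y g)"
    by (rule opnorm_scaleR_le[OF BL_diff[OF delta_BL delta_BL]])
  also have "\<dots> \<le> \<bar>1 / norm (x - y)\<bar> * norm (x - y)"
    by (rule mult_left_mono[OF opnorm_delta_diff_le]) simp
  also have "\<dots> = 1"
    using \<open>x \<noteq> y\<close> by simp
  finally show ?thesis .
qed

lemma BLQI:
  assumes "\<And>\<gamma> \<eta>. \<gamma> \<in> FY \<Longrightarrow> \<eta> \<in> FY \<Longrightarrow> T (coset D (\<lambda>f. \<gamma> f + \<eta> f)) = T (coset D \<gamma>) + T (coset D \<eta>)"
    and "\<And>\<gamma> c. \<gamma> \<in> FY \<Longrightarrow> T (coset D (\<lambda>f. c *\<^sub>R \<gamma> f)) = c *\<^sub>R T (coset D \<gamma>)"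
    and "\<And>C. C \<in> quot D \<Longrightarrow> norm (T C) \<le> K * qnorm C"
    and "\<And>C. C \<notin> quot D \<Longrightarrow> T C = 0"
  shows "T \<in> BLQ D"
  using assms unfolding BLQ_def by blast

lemma BLQ_add: "T \<in> BLQ D \<Longrightarrow> \<gamma> \<in> FY \<Longrightarrow> \<eta> \<in> FY \<Longrightarrow>
    T (coset D (\<lambda>f. \<gamma> f + \<eta> f)) = T (coset D \<gamma>) + T (coset D \<eta>)"
  by (simp add: BLQ_def)

lemma BLQ_scaleR: "T \<in> BLQ D \<Longrightarrow> \<gamma> \<in> FY \<Longrightarrow> T (coset D (\<lambda>f. c *\<^sub>R \<gamma> f)) = c *\<^sub>R T (coset D \<gamma>)"
  by (simp add: BLQ_def)

lemma BLQ_diff: "T \<in> BLQ D \<Longrightarrow> \<gamma> \<in> FY \<Longrightarrow> \<eta> \<in> FY \<Longrightarrow>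
    T (coset D (\<lambda>f. \<gamma> f - \<eta> f)) = T (coset D \<gamma>) - T (coset D \<eta>)"
  using BLQ_add[OF _ _ FY_scaleR, of T D \<gamma> \<eta> "-1"] BLQ_scaleR[of T D \<eta> "-1"] by simp

lemma BLQ_zero: "T \<in> BLQ D \<Longrightarrow> T (coset D (\<lambda>f. 0)) = 0"
  using BLQ_scaleR[OF _ FY_zero, of T D 0] by simp

lemma BLQ_outside_quot: "T \<in> BLQ D \<Longrightarrow> C \<notin> quot D \<Longrightarrow> T C = 0"
  by (simp add: BLQ_def)

lemma BLQ_boundedE:
  assumes D: "subspace_FY D" and T: "T \<in> BLQ D"
  obtains K where "0 \<le> K" and "\<And>C. C \<in> quot D \<Longrightarrow> norm (T C) \<le> K * qnorm C"
proof -
  obtain K where K: "\<And>C. C \<in> quot D \<Longrightarrow> norm (T C) \<le> K * qnorm C"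
    using T unfolding BLQ_def by blast
  have "norm (T C) \<le> \<bar>K\<bar> * qnorm C" if "C \<in> quot D" for C
    using K[OF that] qnorm_nonneg[OF D that] by (meson abs_ge_self mult_right_mono order.trans)
  then show thesis
    using that[of "\<bar>K\<bar>"] by simp
qed

lemma BLQ_bounded_on_FY:
  assumes D: "subspace_FY D" and T: "T \<in> BLQ D"
  obtains K where "0 \<le> K" and "\<And>\<gamma>. \<gamma> \<in> FY \<Longrightarrow> norm (T (coset D \<gamma>)) \<le> K * opnorm \<gamma>"
proof -
  obtain K where "0 \<le> K" and K: "\<And>C. C \<in> quot D \<Longrightarrow> norm (T C) \<le> K * qnorm C"
    using BLQ_boundedE[OF D T] by blast
  have "norm (T (coset D \<gamma>)) \<le> K * opnorm \<gamma>" if "\<gamma> \<in> FY" for \<gamma>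
  proof -
    have C: "coset D \<gamma> \<in> quot D"
      using that by (rule coset_in_quot)
    have "norm (T (coset D \<gamma>)) \<le> K * qnorm (coset D \<gamma>)"
      by (rule K[OF C])
    also have "\<dots> \<le> K * opnorm \<gamma>"
      using qnorm_le_opnorm[OF D C coset_self[OF D]] \<open>0 \<le> K\<close> by (rule mult_left_mono)
    finally show ?thesis .
  qed
  with \<open>0 \<le> K\<close> show thesis
    by (rule that)
qed

lemma qopnorm_upper:
  assumes D: "subspace_FY D" and T: "T \<in> BLQ D" and C: "C \<in> quot D" "qnorm C \<le> 1"
  shows "norm (T C) \<le> qopnorm D T"
proof -
  obtain K where "0 \<le> K" and K: "\<And>C. C \<in> quot D \<Longrightarrow> norm (T C) \<le> K * qnorm C"
    using BLQ_boundedE[OF D T] by blast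
  have "norm (T C') \<le> K" if "C' \<in> quot D" "qnorm C' \<le> 1" for C'
    using K[OF that(1)] mult_left_le[OF that(2) \<open>0 \<le> K\<close>] by linarith
  then have "bdd_above {norm (T C) | C. C \<in> quot D \<and> qnorm C \<le> 1}"
    by (intro bdd_aboveI[where M = K]) auto
  then show ?thesis
    unfolding qopnorm_def using C by (intro cSup_upper) auto
qed

lemma qopnorm_least:
  assumes D: "subspace_FY D" and bound: "\<And>C. C \<in> quot D \<Longrightarrow> qnorm C \<le> 1 \<Longrightarrow> norm (T C) \<le> M"
  shows "qopnorm D T \<le> M"
  unfolding qopnorm_def
proof (rule cSup_least)
  show "{norm (T C) | C. C \<in> quot D \<and> qnorm C \<le> 1} \<noteq> {}"
    using coset_in_quot[OF FY_zero] qnorm_coset_zero[OF D] by fastforce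
qed (use bound in auto)

lemma qopnorm_nonneg:
  assumes D: "subspace_FY D" and T: "T \<in> BLQ D"
  shows "0 \<le> qopnorm D T"
proof -
  have "norm (T (coset D (\<lambda>f. 0))) \<le> qopnorm D T"
    using qopnorm_upper[OF D T coset_in_quot[OF FY_zero]] qnorm_coset_zero[OF D] by simp
  then show ?thesis
    by (rule order.trans[OF norm_ge_zero])
qed

section \<open>The isometric isomorphism\<close>

lemma preannih_Lip0: "f \<in> preannih D \<Longrightarrow> f \<in> Lip0"
  by (simp add: preannih_def)

lemma preannih_apply_coset: "f \<in> preannih D \<Longrightarrow> \<gamma>' \<in> coset D \<gamma> \<Longrightarrow> \<gamma>' f = \<gamma> f"
  by (auto simp: preannih_def mem_coset_iff)

lemma norm_apply_le_lipnorm_qnorm: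
  assumes D: "subspace_FY D" and f: "f \<in> preannih D" and C: "C \<in> quot D" "\<gamma> \<in> C"
  shows "norm (\<gamma> f) \<le> lipnorm f * qnorm C"
proof -
  have f_Lip0: "f \<in> Lip0"
    using f by (rule preannih_Lip0)
  have bound: "norm (\<gamma> f) \<le> lipnorm f * opnorm \<gamma>'" if "\<gamma>' \<in> C" for \<gamma>'
  proof -
    obtain \<gamma>\<^sub>0 where "C = coset D \<gamma>\<^sub>0"
      using C(1) by (rule quotE)
    then have "\<gamma> f = \<gamma>' f"
      using preannih_apply_coset[OF f] C(2) that by metis
    moreover have "\<gamma>' \<in> BL"
      using quot_subset_FY[OF D C(1)] that FY_BL by blast
    ultimately show ?thesis
      using norm_apply_le_opnorm[OF _ f_Lip0] by (simp add: mult.commute)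
  qed
  show ?thesis
  proof (cases "lipnorm f = 0")
    case True
    then show ?thesis
      using bound[OF C(2)] by simp
  next
    case False
    then have "0 < lipnorm f"
      using lipnorm_nonneg[OF f_Lip0] by simp
    then have "norm (\<gamma> f) / lipnorm f \<le> qnorm C"
      unfolding qnorm_def using C(2) bound
      by (intro cInf_greatest) (auto simp: divide_le_eq mult.commute)
    with \<open>0 < lipnorm f\<close> show ?thesis
      by (simp add: divide_le_eq mult.commute)
  qed
qed

lemma Phi_apply_coset:
  assumes "subspace_FY D" and "f \<in> preannih D" and "\<gamma> \<in> FY"
  shows "Phi D f (coset D \<gamma>) = \<gamma> f"
proof -
  have "(SOME \<gamma>'. \<gamma>' \<in> coset D \<gamma>) \<in> coset D \<gamma>"
    using coset_self[OF assms(1), of \<gamma>] by (rule someI[of "\<lambda>\<gamma>'. \<gamma>' \<in> coset D \<gamma>"])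
  with assms(2) have "(SOME \<gamma>'. \<gamma>' \<in> coset D \<gamma>) f = \<gamma> f"
    by (rule preannih_apply_coset)
  then show ?thesis
    unfolding Phi_def using assms(3) by (simp add: coset_in_quot)
qed

lemma Phi_outside_quot: "C \<notin> quot D \<Longrightarrow> Phi D f C = 0"
  by (simp add: Phi_def)

lemma Phi_apply_coset_delta: "subspace_FY D \<Longrightarrow> f \<in> preannih D \<Longrightarrow> Phi D f (coset D (delta x)) = f x"
  using Phi_apply_coset[OF _ _ delta_FY, of D f x] delta_apply[OF preannih_Lip0, of f D x] by simp

lemma some_in_quot_FY:
  assumes "subspace_FY D" and "C \<in> quot D"
  shows "(SOME \<gamma>. \<gamma> \<in> C) \<in> FY"
  using some_in_eq[of C] quot_subset_FY[OF assms] quot_nonempty[OF assms] by blast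

lemma Phi_add:
  assumes "subspace_FY D" and "f \<in> Lip0" and "g \<in> Lip0"
  shows "Phi D (\<lambda>x. f x + g x) = (\<lambda>C. Phi D f C + Phi D g C)"
proof
  fix C
  show "Phi D (\<lambda>x. f x + g x) C = Phi D f C + Phi D g C"
    using assms by (simp add: Phi_def BL_apply_add FY_BL some_in_quot_FY)
qed

lemma Phi_scaleR:
  assumes "subspace_FY D" and "f \<in> Lip0"
  shows "Phi D (\<lambda>x. c *\<^sub>R f x) = (\<lambda>C. c *\<^sub>R Phi D f C)"
proof
  fix C
  show "Phi D (\<lambda>x. c *\<^sub>R f x) C = c *\<^sub>R Phi D f C"
    using assms by (simp add: Phi_def BL_apply_scaleR FY_BL some_in_quot_FY)
qed

lemma Phi_in_BLQ:
  assumes D: "subspace_FY D" and f: "f \<in> preannih D"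
  shows "Phi D f \<in> BLQ D"
proof (rule BLQI)
  fix C assume C: "C \<in> quot D"
  then obtain \<gamma> where \<gamma>: "\<gamma> \<in> FY" "C = coset D \<gamma>"
    by (rule quotE)
  have "norm (\<gamma> f) \<le> lipnorm f * qnorm C"
    using \<gamma>(2) coset_self[OF D] by (intro norm_apply_le_lipnorm_qnorm[OF D f C]) simp
  then show "norm (Phi D f C) \<le> lipnorm f * qnorm C"
    using Phi_apply_coset[OF D f \<gamma>(1)] \<gamma>(2) by simp
next
  fix \<gamma> \<eta> :: "('a \<Rightarrow> 'b) \<Rightarrow> 'b" assume \<gamma>: "\<gamma> \<in> FY" and \<eta>: "\<eta> \<in> FY"
  show "Phi D f (coset D (\<lambda>g. \<gamma> g + \<eta> g)) = Phi D f (coset D \<gamma>) + Phi D f (coset D \<eta>)"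
    unfolding Phi_apply_coset[OF D f FY_add[OF \<gamma> \<eta>]] Phi_apply_coset[OF D f \<gamma>]
      Phi_apply_coset[OF D f \<eta>] ..
next
  fix \<gamma> :: "('a \<Rightarrow> 'b) \<Rightarrow> 'b" and c assume \<gamma>: "\<gamma> \<in> FY"
  show "Phi D f (coset D (\<lambda>g. c *\<^sub>R \<gamma> g)) = c *\<^sub>R Phi D f (coset D \<gamma>)"
    unfolding Phi_apply_coset[OF D f FY_scaleR[OF \<gamma>]] Phi_apply_coset[OF D f \<gamma>] ..
qed (rule Phi_outside_quot)

lemma qopnorm_Phi_le_lipnorm:
  assumes D: "subspace_FY D" and f: "f \<in> preannih D"
  shows "qopnorm D (Phi D f) \<le> lipnorm f"
proof (rule qopnorm_least[OF D])
  fix C assume C: "C \<in> quot D" "qnorm C \<le> 1"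
  then obtain \<gamma> where \<gamma>: "\<gamma> \<in> FY" "C = coset D \<gamma>"
    by (elim quotE)
  have "norm (\<gamma> f) \<le> lipnorm f * qnorm C"
    using \<gamma>(2) coset_self[OF D] by (intro norm_apply_le_lipnorm_qnorm[OF D f C(1)]) simp
  also have "\<dots> \<le> lipnorm f"
    using C(2) lipnorm_nonneg[OF preannih_Lip0[OF f]] by (simp add: mult_left_le)
  finally show "norm (Phi D f C) \<le> lipnorm f"
    using Phi_apply_coset[OF D f \<gamma>(1)] \<gamma>(2) by simp
qed

lemma lipnorm_le_qopnorm_Phi:
  assumes D: "subspace_FY D" and f: "f \<in> preannih D"
  shows "lipnorm f \<le> qopnorm D (Phi D f)"
proof (rule lipnorm_least)
  fix x y
  show "norm (f x - f y) \<le> qopnorm D (Phi D f) * norm (x - y)"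
  proof (cases "x = y")
    case False
    define \<gamma> :: "('a \<Rightarrow> 'b) \<Rightarrow> 'b" where "\<gamma> = (\<lambda>g. (1 / norm (x - y)) *\<^sub>R (delta x g - delta y g))"
    have \<gamma>_FY: "\<gamma> \<in> FY"
      unfolding \<gamma>_def by (intro FY_scaleR FY_diff delta_FY)
    have "norm (\<gamma> f) \<le> qopnorm D (Phi D f)"
      using qopnorm_upper[OF D Phi_in_BLQ[OF D f] coset_in_quot[OF \<gamma>_FY]]
        qnorm_delta_diff_quotient_le_1[OF D False] Phi_apply_coset[OF D f \<gamma>_FY]
      by (simp add: \<gamma>_def)
    moreover have "\<gamma> f = (1 / norm (x - y)) *\<^sub>R (f x - f y)"
      using preannih_Lip0[OF f] by (simp add: \<gamma>_def delta_apply)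
    ultimately show ?thesis
      using False by (simp add: divide_le_eq mult.commute)
  qed simp
qed (rule qopnorm_nonneg[OF D Phi_in_BLQ[OF D f]])

lemma qopnorm_Phi: "subspace_FY D \<Longrightarrow> f \<in> preannih D \<Longrightarrow> qopnorm D (Phi D f) = lipnorm f"
  by (intro antisym qopnorm_Phi_le_lipnorm lipnorm_le_qopnorm_Phi)

definition Phi_inv :: "(('a::real_normed_vector \<Rightarrow> 'b::real_normed_vector) \<Rightarrow> 'b) set
    \<Rightarrow> ((('a \<Rightarrow> 'b) \<Rightarrow> 'b) set \<Rightarrow> 'b) \<Rightarrow> 'a \<Rightarrow> 'b" where
  "Phi_inv D T = (\<lambda>x. T (coset D (delta x)))"

lemma Phi_inv_Lip0:
  assumes D: "subspace_FY D" and T: "T \<in> BLQ D"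
  shows "Phi_inv D T \<in> Lip0"
proof -
  obtain K where "0 \<le> K" and K: "\<And>\<gamma>. \<gamma> \<in> FY \<Longrightarrow> norm (T (coset D \<gamma>)) \<le> K * opnorm \<gamma>"
    using BLQ_bounded_on_FY[OF D T] by blast
  have "norm (Phi_inv D T x - Phi_inv D T y) \<le> K * norm (x - y)" for x y
  proof -
    have "Phi_inv D T x - Phi_inv D T y = T (coset D (\<lambda>g. delta x g - delta y g))"
      unfolding Phi_inv_def by (rule BLQ_diff[OF T delta_FY delta_FY, symmetric])
    also have "norm \<dots> \<le> K * opnorm (\<lambda>g::'a \<Rightarrow> 'b. delta x g - delta y g)"
      by (rule K[OF FY_diff[OF delta_FY delta_FY]])
    also have "\<dots> \<le> K * norm (x - y)"
      using \<open>0 \<le> K\<close> by (rule mult_left_mono[OF opnorm_delta_diff_le])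
    finally show ?thesis .
  qed
  moreover have "Phi_inv D T 0 = 0"
    using BLQ_zero[OF T] by (simp add: Phi_inv_def delta_zero)
  ultimately show ?thesis
    unfolding Lip0_def by blast
qed

lemma Phi_inv_Phi: "subspace_FY D \<Longrightarrow> f \<in> preannih D \<Longrightarrow> Phi_inv D (Phi D f) = f"
  by (simp add: Phi_inv_def Phi_apply_coset_delta)

lemma BLQ_apply_coset_span_delta:
  assumes D: "subspace_FY D" and T: "T \<in> BLQ D" and \<eta>: "\<eta> \<in> span_delta"
  shows "T (coset D \<eta>) = \<eta> (Phi_inv D T)"
proof -
  have "T (coset D (\<lambda>g. \<Sum>i<(n::nat). c i *\<^sub>R delta (x i) g)) = (\<Sum>i<n. c i *\<^sub>R Phi_inv D T (x i))"
    for n c x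
  proof (induction n)
    case 0
    then show ?case
      using BLQ_zero[OF T] by simp
  next
    case (Suc n)
    have "(\<lambda>g. \<Sum>i<n. c i *\<^sub>R delta (x i) g) \<in> FY"
      using span_delta_subset_FY unfolding span_delta_def by blast
    from BLQ_add[OF T this FY_scaleR[OF delta_FY]]
    have "T (coset D (\<lambda>g. \<Sum>i<Suc n. c i *\<^sub>R delta (x i) g))
        = T (coset D (\<lambda>g. \<Sum>i<n. c i *\<^sub>R delta (x i) g)) + T (coset D (\<lambda>g. c n *\<^sub>R delta (x n) g))"
      by simp
    also have "\<dots> = (\<Sum>i<Suc n. c i *\<^sub>R Phi_inv D T (x i))"
      using Suc BLQ_scaleR[OF T delta_FY] by (simp add: Phi_inv_def)
    finally show ?case .
  qed
  with \<eta> Phi_inv_Lip0[OF D T] show ?thesis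
    unfolding span_delta_def by (auto simp: delta_apply)
qed

lemma BLQ_apply_coset:
  assumes D: "subspace_FY D" and T: "T \<in> BLQ D" and \<gamma>: "\<gamma> \<in> FY"
  shows "T (coset D \<gamma>) = \<gamma> (Phi_inv D T)"
proof -
  define f where "f = Phi_inv D T"
  have f: "f \<in> Lip0"
    unfolding f_def by (rule Phi_inv_Lip0[OF D T])
  obtain K where K: "\<And>\<gamma>. \<gamma> \<in> FY \<Longrightarrow> norm (T (coset D \<gamma>)) \<le> K * opnorm \<gamma>"
    using BLQ_bounded_on_FY[OF D T] by blast
  have "T (coset D \<gamma>) - \<gamma> f = 0"
  proof (rule bounded_additive_eq_0_on_FY[where L = "\<lambda>\<gamma>. T (coset D \<gamma>) - \<gamma> f"])
    fix \<gamma>' :: "('a \<Rightarrow> 'b) \<Rightarrow> 'b" assume "\<gamma>' \<in> FY"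
    have "norm (T (coset D \<gamma>') - \<gamma>' f) \<le> norm (T (coset D \<gamma>')) + norm (\<gamma>' f)"
      by (rule norm_triangle_ineq4)
    also have "\<dots> \<le> K * opnorm \<gamma>' + opnorm \<gamma>' * lipnorm f"
      using \<open>\<gamma>' \<in> FY\<close> by (intro add_mono K norm_apply_le_opnorm[OF FY_BL f])
    also have "\<dots> = (K + lipnorm f) * opnorm \<gamma>'"
      by (simp add: algebra_simps)
    finally show "norm (T (coset D \<gamma>') - \<gamma>' f) \<le> (K + lipnorm f) * opnorm \<gamma>'" .
  qed (use \<gamma> BLQ_diff[OF T] BLQ_apply_coset_span_delta[OF D T] in \<open>simp_all add: f_def\<close>)
  then show ?thesis
    by (simp add: f_def)
qed

lemma Phi_inv_in_preannih:
  assumes D: "subspace_FY D" and T: "T \<in> BLQ D"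
  shows "Phi_inv D T \<in> preannih D"
proof -
  have "\<gamma> (Phi_inv D T) = 0" if "\<gamma> \<in> D" for \<gamma>
  proof -
    have "\<gamma> (Phi_inv D T) = T (coset D \<gamma>)"
      using that subspace_FY_subset[OF D] by (auto simp: BLQ_apply_coset[OF D T])
    also have "coset D \<gamma> = coset D (\<lambda>f. 0)"
      using coset_eq_if_mem[OF D that] coset_eq_if_mem[OF D subspace_FY_zero[OF D]] by simp
    finally show ?thesis
      using BLQ_zero[OF T] by simp
  qed
  then show ?thesis
    using Phi_inv_Lip0[OF D T] by (simp add: preannih_def)
qed

lemma Phi_Phi_inv:
  assumes D: "subspace_FY D" and T: "T \<in> BLQ D"
  shows "Phi D (Phi_inv D T) = T"
proof
  fix C
  show "Phi D (Phi_inv D T) C = T C"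
  proof (cases "C \<in> quot D")
    case True
    then obtain \<gamma> where "\<gamma> \<in> FY" "C = coset D \<gamma>"
      by (rule quotE)
    then show ?thesis
      using Phi_apply_coset[OF D Phi_inv_in_preannih[OF D T]] BLQ_apply_coset[OF D T] by simp
  next
    case False
    then show ?thesis
      using BLQ_outside_quot[OF T] by (simp add: Phi_outside_quot)
  qed
qed

theorem mainTheorem14:
  fixes D :: "(('a::banach \<Rightarrow> 'b::banach) \<Rightarrow> 'b) set"
  assumes "closed_subspace_FY D"
  shows "bij_betw (Phi D) (preannih D) (BLQ D)
    \<and> (\<forall>f\<in>preannih D. \<forall>g\<in>preannih D.
          Phi D (\<lambda>x. f x + g x) = (\<lambda>C. Phi D f C + Phi D g C))
    \<and> (\<forall>f\<in>preannih D. \<forall>c. Phi D (\<lambda>x. c *\<^sub>R f x) = (\<lambda>C. c *\<^sub>R Phi D f C))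
    \<and> (\<forall>f\<in>preannih D. qopnorm D (Phi D f) = lipnorm f)"
proof -
  have D: "subspace_FY D"
    using assms by (rule subspace_FY_if_closed_subspace_FY)
  have "bij_betw (Phi D) (preannih D) (BLQ D)"
    by (rule bij_betw_byWitness[where f' = "Phi_inv D"])
      (auto simp: D Phi_inv_Phi Phi_Phi_inv Phi_in_BLQ Phi_inv_in_preannih)
  then show ?thesis
    using D by (simp add: Phi_add Phi_scaleR qopnorm_Phi preannih_Lip0)
qed

end
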